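(* If $\sigma:{}^{<\omega}\omega\to\omega$ is suitable, then $\mathscr C_{\mathcal M}\preceq\mathscr{ED}_\sigma\preceq\mathscr{ED}$. In particular these three relational systems have the same norms, i.e. $\|\mathscr C_{\mathcal M}\|=\|\mathscr{ED}_\sigma\|=\|\mathscr{ED}\|$ and $\|\mathscr C_{\mathcal M}^\perp\|=\|\mathscr{ED}_\sigma^\perp\|=\|\mathscr{ED}^\perp\|$.
   Context: A relational system is a triple $\langle X,Y,R\rangle$ with $R\subseteq X\times Y$; its norm is the least cardinality of $B\subseteq Y$ such that for every $x\in X$ there is $y\in B$ with $(x,y)\in R$. Its dual is $\langle Y,X,R^\perp\rangle$ where $(y,x)\in R^\perp$ iff $(x,y)\notin R$. A Tukey connection from $\langle X,Y,R\rangle$ to $\langle X',Y',R'\rangle$ is a pair of maps $\rho_-:X\to X'$, $\rho_+:Y'\to Y$ such that $(\rho_-(x),y')\in R'$ implies $(x,\rho_+(y'))\in R$; its existence is written $\langle X,Y,R\rangle\preceq\langle X',Y',R'\rangle$. Let $\mathcal M$ be the ideal of meagre subsets of the Baire space ${}^\omega\omega$, and $\mathscr C_{\mathcal M}=\langle{}^\omega\omega,\mathcal M,\in\rangle$. For $x,y\in{}^\omega\omega$, $x=^\infty y$ means $x(k)=y(k)$ for infinitely many $k$; $\mathscr{ED}=\langle{}^\omega\omega,{}^\omega\omega,\neq^\infty\rangle$ where $x\neq^\infty y$ means not $x=^\infty y$. For $\sigma:{}^{<\omega}\omega\to\omega$, $x=^\infty_\sigma y$ means there are infinitely many $k$ with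 $x(k)=y(k)$ and $\sigma(x\restriction k)=\sigma(y\restriction k)$; $\mathscr{ED}_\sigma=\langle{}^\omega\omega,{}^\omega\omega,\neq^\infty_\sigma\rangle$ where $x\neq^\infty_\sigma y$ means not $x=^\infty_\sigma y$. The function $\sigma$ is suitable if for every $s\in{}^{<\omega}\omega$ and $x\in{}^\omega\omega$ there are $k\in\omega$ and $t\in{}^k\omega$ with $s\subseteq t$ and $\sigma(t)=\sigma(x\restriction k)$. *)

theory Defs
  imports "HOL-Analysis.Analysis" "HOL-Library.Equipollence"
begin

type_synonym ('a,'b) relsys = "'a set \<times> 'b set \<times> ('a \<Rightarrow> 'b \<Rightarrow> bool)"

definition dual_rs :: "('a,'b) relsys \<Rightarrow> ('b,'a) relsys" where
  "dual_rs S = (case S of (X, Y, R) \<Rightarrow> (Y, X, \<lambda>y x. \<not> R x y))"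

definition bounding_family :: "('a,'b) relsys \<Rightarrow> 'b set \<Rightarrow> bool" where
  "bounding_family S B = (case S of (X, Y, R) \<Rightarrow> B \<subseteq> Y \<and> (\<forall>x\<in>X. \<exists>y\<in>B. R x y))"

(* ||S|| \<le> ||T||: every witness family for T has one for S of no larger cardinality *)
definition norm_le :: "('a,'b) relsys \<Rightarrow> ('c,'d) relsys \<Rightarrow> bool" where
  "norm_le S T = (\<forall>B. bounding_family T B \<longrightarrow> (\<exists>B'. bounding_family S B' \<and> B' \<lesssim> B))"

definition norm_eq :: "('a,'b) relsys \<Rightarrow> ('c,'d) relsys \<Rightarrow> bool" where
  "norm_eq S T = (norm_le S T \<and> norm_le T S)"

definition tukey_le :: "('a,'b) relsys \<Rightarrow> ('c,'d) relsys \<Rightarrow> bool" where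
  "tukey_le S T = (case S of (X, Y, R) \<Rightarrow> case T of (X', Y', R') \<Rightarrow>
     (\<exists>rm rp. rm \<in> X \<rightarrow> X' \<and> rp \<in> Y' \<rightarrow> Y \<and>
        (\<forall>x\<in>X. \<forall>y'\<in>Y'. R' (rm x) y' \<longrightarrow> R x (rp y'))))"

(* Baire space nat \<Rightarrow> nat with the product topology (nat discrete) *)
definition nowhere_dense :: "(nat \<Rightarrow> nat) set \<Rightarrow> bool" where
  "nowhere_dense A = (interior (closure A) = {})"

definition meagre :: "(nat \<Rightarrow> nat) set \<Rightarrow> bool" where
  "meagre A = (\<exists>F :: nat \<Rightarrow> (nat \<Rightarrow> nat) set.
                 (\<forall>n. nowhere_dense (F n)) \<and> A \<subseteq> (\<Union>n. F n))"

definition C_M :: "(nat \<Rightarrow> nat, (nat \<Rightarrow> nat) set) relsys" where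
  "C_M = (UNIV, {A. meagre A}, \<lambda>x A. x \<in> A)"

definition inf_eq :: "(nat \<Rightarrow> nat) \<Rightarrow> (nat \<Rightarrow> nat) \<Rightarrow> bool" where
  "inf_eq x y = infinite {k. x k = y k}"

definition ED :: "(nat \<Rightarrow> nat, nat \<Rightarrow> nat) relsys" where
  "ED = (UNIV, UNIV, \<lambda>x y. \<not> inf_eq x y)"

(* sequences in ^{<\<omega>}\<omega> are lists; x\<restriction>k = map x [0..<k] *)
definition restr :: "(nat \<Rightarrow> nat) \<Rightarrow> nat \<Rightarrow> nat list" where
  "restr x k = map x [0..<k]"

definition inf_eq_sigma :: "(nat list \<Rightarrow> nat) \<Rightarrow> (nat \<Rightarrow> nat) \<Rightarrow> (nat \<Rightarrow> nat) \<Rightarrow> bool" where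
  "inf_eq_sigma \<sigma> x y = infinite {k. x k = y k \<and> \<sigma> (restr x k) = \<sigma> (restr y k)}"

definition ED_sigma :: "(nat list \<Rightarrow> nat) \<Rightarrow> (nat \<Rightarrow> nat, nat \<Rightarrow> nat) relsys" where
  "ED_sigma \<sigma> = (UNIV, UNIV, \<lambda>x y. \<not> inf_eq_sigma \<sigma> x y)"

definition suitable :: "(nat list \<Rightarrow> nat) \<Rightarrow> bool" where
  "suitable \<sigma> = (\<forall>s x. \<exists>k t. length t = k \<and> (\<exists>u. t = s @ u) \<and> \<sigma> t = \<sigma> (restr x k))"

end

theory Submission
  imports Defs
begin

(* The identity is a Tukey connection from ED_sigma to ED. For C_M \<preceq> ED_sigma, send y to
   {x. x \<noteq>\<^sup>\<infinity>\<^sub>\<sigma> y}, the union over n of the sets of x that never agree with y in both senses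
   beyond n. Each of these is nowhere dense: suitability extends any finite sequence to some t
   with \<sigma> t = \<sigma> (y\<restriction>|t|), and appending y |t| then forces agreement at |t|.
   Tukey connections bound norms and dualize, so it remains to show ||ED|| \<le> ||C_M|| and
   ||C_M\<^sup>\<bottom>|| \<le> ||ED\<^sup>\<bottom>||. Both follow from a single coding map (z, u) \<mapsto> code_real z u: for every
   meagre A there are g and h with code_real z u \<notin> A whenever u =\<^sup>\<infinity> g and z =\<^sup>\<infinity> h u.

   To find g and h, cover A by the reals that an extension function e hits only finitely
   often. From e one builds a partition (i_k) such that one finite sequence, placed between
   i_k and i_(k+1), extends every sequence of weight at most i_k into the range of e i_k.
   If u =\<^sup>\<infinity> g, infinitely many intervals of the partition determined by u contain some
   [i_k, i_(k+1)); if z =\<^sup>\<infinity> h u, then z names the right sequence for infinitely many of these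
   intervals, code_real z u writes it there, and is therefore hit by e infinitely often. *)

lemma tukey_le_imp_norm_le:
  assumes "tukey_le S T"
  shows "norm_le S T"
proof -
  obtain X Y R X' Y' R' where S: "S = (X, Y, R)" and T: "T = (X', Y', R')"
    by (cases S, cases T) auto
  from assms obtain \<rho>m \<rho>p where \<rho>m: "\<rho>m \<in> X \<rightarrow> X'" and \<rho>p: "\<rho>p \<in> Y' \<rightarrow> Y"
    and \<rho>: "\<forall>x\<in>X. \<forall>y'\<in>Y'. R' (\<rho>m x) y' \<longrightarrow> R x (\<rho>p y')"
    unfolding S T tukey_le_def by auto
  have "bounding_family S (\<rho>p ` B)" if "bounding_family T B" for B
    using that \<rho>m \<rho>p \<rho> unfolding S T bounding_family_def by (fastforce simp: Pi_iff)
  then show ?thesis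
    unfolding norm_le_def using image_lepoll by blast
qed

lemma tukey_le_dual: "tukey_le S T \<Longrightarrow> tukey_le (dual_rs T) (dual_rs S)"
  by (cases S, cases T) (fastforce simp: tukey_le_def dual_rs_def)

lemma norm_le_trans: "norm_le S T \<Longrightarrow> norm_le T U \<Longrightarrow> norm_le S U"
  unfolding norm_le_def by (meson lepoll_trans)

subsection \<open>Cylinders in the Baire space\<close>

definition cylinder :: "nat list \<Rightarrow> (nat \<Rightarrow> nat) set" where
  "cylinder t = {x. restr x (length t) = t}"

lemma length_restr [simp]: "length (restr x n) = n"
  unfolding restr_def by simp

lemma nth_restr [simp]: "i < n \<Longrightarrow> restr x n ! i = x i"
  unfolding restr_def by simp

lemma mem_cylinder: "x \<in> cylinder t \<longleftrightarrow> (\<forall>i<length t. x i = t ! i)"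
  unfolding cylinder_def by (simp add: list_eq_iff_nth_eq[of "restr x (length t)"])

lemma cylinder_nonempty: "cylinder t \<noteq> {}"
  using mem_cylinder[of "\<lambda>i. if i < length t then t ! i else 0" t] by auto

lemma cylinder_append_subset: "cylinder (s @ u) \<subseteq> cylinder s"
  by (auto simp: mem_cylinder nth_append)

lemma cylinder_restr_antimono: "k \<le> n \<Longrightarrow> cylinder (restr x n) \<subseteq> cylinder (restr x k)"
  by (auto simp: mem_cylinder restr_def)

lemma restr_prefix: "k \<le> n \<Longrightarrow> \<exists>u. restr x n = restr x k @ u"
  using upt_add_eq_append[of 0 k "n - k"] by (auto simp: restr_def)

lemma open_cylinder: "open (cylinder t)"
proof -
  have "open {f :: nat \<Rightarrow> nat. \<forall>i\<in>{..<length t}. f (id i) \<in> {t ! i}}"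
    by (rule product_topology_basis') (auto simp: open_discrete)
  moreover have "cylinder t = {f. \<forall>i\<in>{..<length t}. f (id i) \<in> {t ! i}}"
    by (auto simp: mem_cylinder)
  ultimately show ?thesis by simp
qed

lemma open_cylinder_nbhd:
  assumes "open U" "x \<in> U"
  shows "\<exists>k. cylinder (restr x k) \<subseteq> U"
proof -
  obtain V where V: "finite {i. V i \<noteq> UNIV}" "x \<in> Pi\<^sub>E UNIV V" "Pi\<^sub>E UNIV V \<subseteq> U"
    using assms unfolding open_fun_def openin_product_topology_alt by force
  obtain k where k: "{i. V i \<noteq> UNIV} \<subseteq> {..<k}"
    using finite_nat_bounded[OF V(1)] by blast
  have "y i \<in> V i" if "y \<in> cylinder (restr x k)" for y i
  proof (cases "V i = UNIV")
    case False
    then have "i < k" using k by blast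
    then have "y i = x i" using that by (simp add: mem_cylinder)
    then show ?thesis using V(2) by (simp add: PiE_iff)
  qed simp
  then have "cylinder (restr x k) \<subseteq> Pi\<^sub>E UNIV V" by (auto simp: PiE_iff)
  then show ?thesis using V(3) by blast
qed

lemma nowhere_denseI:
  assumes "\<And>s. n \<le> length s \<Longrightarrow> \<exists>u. cylinder (s @ u) \<inter> F = {}"
  shows "nowhere_dense F"
  unfolding nowhere_dense_def
proof (rule ccontr)
  assume "interior (closure F) \<noteq> {}"
  then obtain z k where k: "cylinder (restr z k) \<subseteq> interior (closure F)"
    using open_cylinder_nbhd[OF open_interior] by blast
  define s where "s = restr z (max k n)"
  have "cylinder s \<subseteq> closure F"
    using k cylinder_restr_antimono[of k "max k n" z] interior_subset unfolding s_def by fastforce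
  obtain u where "cylinder (s @ u) \<inter> F = {}"
    using assms[of s] unfolding s_def by auto
  then have "cylinder (s @ u) \<inter> closure F = {}"
    using open_Int_closure_eq_empty[OF open_cylinder] by blast
  then show False
    using \<open>cylinder s \<subseteq> closure F\<close> cylinder_append_subset[of s u] cylinder_nonempty[of "s @ u"]
    by blast
qed

lemma nowhere_dense_extend:
  assumes "nowhere_dense F"
  shows "\<exists>u. cylinder (s @ u) \<inter> F = {}"
proof -
  have "\<not> cylinder s \<subseteq> closure F"
    using assms cylinder_nonempty[of s] interior_maximal[OF _ open_cylinder]
    unfolding nowhere_dense_def by blast
  then obtain x where x: "x \<in> cylinder s" "x \<notin> closure F" by blast
  then obtain k where k: "cylinder (restr x k) \<subseteq> - closure F"
    using open_cylinder_nbhd[of "- closure F" x] by blast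
  obtain u where u: "restr x (max k (length s)) = s @ u"
    using restr_prefix[of "length s" "max k (length s)" x] x(1) unfolding cylinder_def by auto
  have "cylinder (s @ u) \<subseteq> - closure F"
    using k cylinder_restr_antimono[of k "max k (length s)" x] unfolding u by auto
  then show ?thesis using closure_subset by blast
qed

lemma tukey_le_ED_sigma_ED: "tukey_le (ED_sigma \<sigma>) ED"
  unfolding tukey_le_def ED_sigma_def ED_def inf_eq_def inf_eq_sigma_def
  by (auto intro!: exI[of _ id] elim!: infinite_super)

lemma meagre_not_inf_eq_sigma:
  assumes "suitable \<sigma>"
  shows "meagre {x. \<not> inf_eq_sigma \<sigma> x y}"
proof -
  define agree where "agree x k \<longleftrightarrow> x k = y k \<and> \<sigma> (restr x k) = \<sigma> (restr y k)" for x k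
  define F where "F n = {x. \<forall>k\<ge>n. \<not> agree x k}" for n
  have "{x. \<not> inf_eq_sigma \<sigma> x y} \<subseteq> (\<Union>n. F n)"
  proof
    fix x assume "x \<in> {x. \<not> inf_eq_sigma \<sigma> x y}"
    then have "finite {k. agree x k}"
      unfolding inf_eq_sigma_def agree_def by simp
    then obtain n where "{k. agree x k} \<subseteq> {..<n}"
      using finite_nat_bounded by blast
    then have "x \<in> F n"
      unfolding F_def by (auto simp: subset_eq)
    then show "x \<in> (\<Union>n. F n)" by blast
  qed
  moreover have "nowhere_dense (F n)" for n
  proof (rule nowhere_denseI)
    fix s :: "nat list" assume s: "n \<le> length s"
    obtain t u where t: "t = s @ u" "\<sigma> t = \<sigma> (restr y (length t))"
      using assms unfolding suitable_def by blast
    have "agree w (length t)" if "w \<in> cylinder (t @ [y (length t)])" for w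
    proof -
      have "restr w (length t) = t"
        using that cylinder_append_subset unfolding cylinder_def by blast
      moreover have "w (length t) = y (length t)"
        using that by (simp add: mem_cylinder nth_append)
      ultimately show ?thesis
        using t(2) unfolding agree_def by simp
    qed
    moreover have "n \<le> length t" using s t(1) by simp
    ultimately have "cylinder (t @ [y (length t)]) \<inter> F n = {}"
      unfolding F_def by blast
    then show "\<exists>u. cylinder (s @ u) \<inter> F n = {}"
      using t(1) by (metis append.assoc)
  qed
  ultimately show ?thesis
    unfolding meagre_def by blast
qed

lemma tukey_le_C_M_ED_sigma:
  assumes "suitable \<sigma>"
  shows "tukey_le C_M (ED_sigma \<sigma>)"
  unfolding tukey_le_def C_M_def ED_sigma_def
  using meagre_not_inf_eq_sigma[OF assms]
  by (auto intro!: exI[of _ id] exI[of _ "\<lambda>y. {x. \<not> inf_eq_sigma \<sigma> x y}"])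

subsection \<open>Extension functions\<close>

definition extender :: "(nat \<Rightarrow> nat list \<Rightarrow> nat list) \<Rightarrow> bool" where
  "extender e \<longleftrightarrow> (\<forall>m s. \<exists>u. e m s = s @ u)"

definition hit_often :: "(nat \<Rightarrow> nat list \<Rightarrow> nat list) \<Rightarrow> (nat \<Rightarrow> nat) \<Rightarrow> bool" where
  "hit_often e x \<longleftrightarrow> (\<forall>n. \<exists>m\<ge>n. \<exists>s. x \<in> cylinder (e m s))"

lemma meagre_imp_extender:
  assumes "meagre A"
  obtains e where "extender e" "\<And>x. x \<in> A \<Longrightarrow> \<not> hit_often e x"
proof -
  obtain F :: "nat \<Rightarrow> (nat \<Rightarrow> nat) set" where F: "\<And>n. nowhere_dense (F n)" "A \<subseteq> (\<Union>n. F n)"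
    using assms unfolding meagre_def by blast
  define E where "E i s = s @ (SOME u. cylinder (s @ u) \<inter> F i = {})" for i s
  have E_avoids: "cylinder (E i s) \<inter> F i = {}" for i s
    unfolding E_def using someI_ex[OF nowhere_dense_extend[OF F(1)]] .
  define e where "e m = fold E [0..<Suc m]" for m
  have e_Suc: "e (Suc m) s = E (Suc m) (e m s)" for m s
    unfolding e_def by simp
  have "extender e"
    unfolding extender_def
  proof (intro allI)
    show "\<exists>u. e m s = s @ u" for m s
      by (induction m) (simp_all add: e_def E_def, metis append.assoc)
  qed
  have e_avoids: "cylinder (e m s) \<inter> F i = {}" if "i \<le> m" for i m s
    using that
  proof (induction m)
    case 0
    then show ?case using E_avoids by (simp add: e_def)
  next
    case (Suc m)
    show ?case
    proof (cases "i = Suc m")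
      case True
      then show ?thesis using E_avoids by (simp add: e_Suc)
    next
      case False
      then have "cylinder (e m s) \<inter> F i = {}" using Suc by simp
      moreover have "cylinder (e (Suc m) s) \<subseteq> cylinder (e m s)"
        unfolding e_Suc E_def by (rule cylinder_append_subset)
      ultimately show ?thesis by blast
    qed
  qed
  have "\<not> hit_often e x" if "x \<in> A" for x
  proof -
    obtain n where "x \<in> F n" using F(2) \<open>x \<in> A\<close> by blast
    then show ?thesis
      unfolding hit_often_def using e_avoids by blast
  qed
  with \<open>extender e\<close> show ?thesis using that by blast
qed

definition weight :: "nat list \<Rightarrow> nat" where
  "weight s = sum_list (map Suc s)"

lemma weight_simps [simp]:
  "weight [] = 0" "weight (a # s) = Suc a + weight s" "weight (s @ t) = weight s + weight t"
  unfolding weight_def by simp_all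

lemma finite_weight_le: "finite {s. weight s \<le> W}"
proof -
  have "length s \<le> W \<and> set s \<subseteq> {..W}" if "weight s \<le> W" for s
    using that by (induction s arbitrary: W) fastforce+
  then have "{s. weight s \<le> W} \<subseteq> {s. set s \<subseteq> {..W} \<and> length s \<le> W}"
    by blast
  then show ?thesis
    using finite_lists_length_le[of "{..W}" W] finite_subset by blast
qed

definition absorb :: "(nat list \<Rightarrow> nat list) \<Rightarrow> nat list \<Rightarrow> nat list \<Rightarrow> nat list" where
  "absorb f t s = t @ drop (length (s @ t)) (f (s @ t))"

lemma foldl_absorb_extends: "\<exists>v. foldl (absorb f) t ss = t @ v"
  by (induction ss arbitrary: t) (auto simp: absorb_def, metis append.assoc)

lemma foldl_absorb_hits:
  assumes f: "\<And>s. \<exists>u. f s = s @ u" and "s \<in> set ss"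
  shows "\<exists>t' w. s @ foldl (absorb f) t ss = f (s @ t') @ w"
  using \<open>s \<in> set ss\<close>
proof (induction ss arbitrary: t)
  case (Cons s' ss)
  show ?case
  proof (cases "s' = s")
    case True
    obtain d where d: "f (s @ t) = (s @ t) @ d" using f by blast
    obtain v where "foldl (absorb f) (absorb f t s) ss = absorb f t s @ v"
      using foldl_absorb_extends by blast
    then have "s @ foldl (absorb f) t (s' # ss) = f (s @ t) @ v"
      using True d by (simp add: absorb_def)
    then show ?thesis by blast
  next
    case False
    then show ?thesis using Cons by simp
  qed
qed simp

definition universal_ext :: "(nat \<Rightarrow> nat list \<Rightarrow> nat list) \<Rightarrow> nat \<Rightarrow> nat list" where
  "universal_ext e W = foldl (absorb (e W)) [] (SOME ss. set ss = {s. weight s \<le> W})"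

lemma universal_ext_absorbs:
  assumes "extender e" "weight s \<le> W"
  shows "\<exists>t w. s @ universal_ext e W = e W (s @ t) @ w"
proof -
  have "set (SOME ss. set ss = {s. weight s \<le> W}) = {s. weight s \<le> W}"
    using someI_ex[OF finite_list[OF finite_weight_le]] .
  then show ?thesis
    unfolding universal_ext_def
    using foldl_absorb_hits[of "e W"] assms unfolding extender_def by simp
qed

subsection \<open>Two interval partitions\<close>

lemma strict_mono_interval:
  fixes j :: "nat \<Rightarrow> nat"
  assumes "strict_mono j" "j 0 = 0"
  shows "\<exists>m. j m \<le> n \<and> n < j (Suc m)"
proof (induction n)
  case 0
  then show ?case using assms strict_monoD[of j 0 1] by auto
next
  case (Suc n)
  then obtain m where m: "j m \<le> n" "n < j (Suc m)" by blast
  show ?case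
  proof (cases "Suc n < j (Suc m)")
    case True
    then show ?thesis using m by (intro exI[of _ m]) simp
  next
    case False
    then have "Suc n = j (Suc m)" using m by simp
    then show ?thesis using strict_monoD[OF assms(1), of "Suc m" "Suc (Suc m)"] by auto
  qed
qed

primrec bound_partition :: "(nat \<Rightarrow> nat) \<Rightarrow> nat \<Rightarrow> nat" where
  "bound_partition u 0 = 0"
| "bound_partition u (Suc m) = bound_partition u m + 1 + (\<Sum>i\<le>bound_partition u m. u i)"

lemma strict_mono_bound_partition: "strict_mono (bound_partition u)"
  by (rule strict_monoI_Suc) simp

lemma less_bound_partition: "n \<le> bound_partition u m \<Longrightarrow> u n < bound_partition u (Suc m)"
  using member_le_sum[of n "{..bound_partition u m}" u] by simp

definition two_points_after :: "(nat \<Rightarrow> nat) \<Rightarrow> nat \<Rightarrow> nat" where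
  "two_points_after i n = i (Suc (Suc (LEAST k. n \<le> i k)))"

definition covering_indices :: "(nat \<Rightarrow> nat) \<Rightarrow> (nat \<Rightarrow> nat) \<Rightarrow> nat set" where
  "covering_indices i j = {m. \<exists>k. j m \<le> i k \<and> i (Suc k) \<le> j (Suc m)}"

lemma infinite_covering_indices:
  assumes i: "strict_mono i" and u: "inf_eq u (two_points_after i)"
  shows "infinite (covering_indices i (bound_partition u))"
  unfolding infinite_nat_iff_unbounded_le
proof
  fix N
  let ?j = "bound_partition u"
  obtain n where n: "?j N \<le> n" "u n = two_points_after i n"
    using u unfolding inf_eq_def infinite_nat_iff_unbounded_le by blast
  obtain m where m: "?j m \<le> n" "n < ?j (Suc m)"
    using strict_mono_interval[OF strict_mono_bound_partition bound_partition.simps(1)] by blast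
  have "?j N < ?j (Suc m)"
    using n(1) m(2) by simp
  then have "N < Suc m"
    using strict_mono_less[OF strict_mono_bound_partition] by blast
  define k where "k = (LEAST k. n \<le> i k)"
  have k: "n \<le> i k"
    unfolding k_def by (rule LeastI[of _ n]) (rule strict_mono_imp_increasing[OF i])
  have "u n < ?j (Suc (Suc m))"
    using less_bound_partition[OF less_imp_le[OF m(2)]] .
  then have i_SSk: "i (Suc (Suc k)) < ?j (Suc (Suc m))"
    using n(2) unfolding two_points_after_def k_def by simp
  (* As i k \<ge> n \<ge> j m and i (k + 2) < j (m + 2), either [i k, i (k + 1)] fits into [j m, j (m + 1)]
     or [i (k + 1), i (k + 2)] fits into [j (m + 1), j (m + 2)]. *)
  show "\<exists>m'\<ge>N. m' \<in> covering_indices i ?j"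
  proof (cases "i (Suc k) \<le> ?j (Suc m)")
    case True
    then have "m \<in> covering_indices i ?j"
      using m(1) k unfolding covering_indices_def by (auto intro: le_trans)
    then show ?thesis using \<open>N < Suc m\<close> by (intro exI[of _ m]) simp
  next
    case False
    then have "Suc m \<in> covering_indices i ?j"
      using i_SSk unfolding covering_indices_def by (auto intro!: exI[of _ "Suc k"])
    then show ?thesis using \<open>N < Suc m\<close> by (intro exI[of _ "Suc m"]) simp
  qed
qed

subsection \<open>Decoding a function from infinitely many correct guesses\<close>

definition graph_code :: "nat set \<Rightarrow> (nat \<Rightarrow> nat) \<Rightarrow> nat \<Rightarrow> nat" where
  "graph_code A h l = (let as = map (enumerate A) [0..<2^l] in to_nat (zip as (map h as)))"

(* z l is read as a list of pairs (a, h a). Lists with more than 2^l entries are ignored, so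
   fewer than 2^l arguments are claimed before stage l, while a correct guess graph_code A h l
   covers 2^l elements of A and hence reveals h at a fresh one. *)
definition claimed :: "(nat \<Rightarrow> nat) \<Rightarrow> nat \<Rightarrow> nat set" where
  "claimed z l = (let ps = (from_nat (z l) :: (nat \<times> nat) list) in
     if length ps \<le> 2^l then fst ` set ps else {})"

definition decode :: "(nat \<Rightarrow> nat) \<Rightarrow> nat \<Rightarrow> nat" where
  "decode z a = the (map_of (from_nat (z (LEAST l. a \<in> claimed z l)) :: (nat \<times> nat) list) a)"

lemma finite_claimed: "finite (claimed z l)"
  unfolding claimed_def Let_def by simp

lemma card_claimed_le: "card (claimed z l) \<le> 2^l"
proof -
  let ?ps = "from_nat (z l) :: (nat \<times> nat) list"
  have "card (fst ` set ?ps) \<le> length ?ps"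
    using card_image_le[OF finite_set, of fst ?ps] card_length[of ?ps] by linarith
  then show ?thesis
    unfolding claimed_def Let_def by auto
qed

lemma card_claimed_before: "card (\<Union>l'<l. claimed z l') < 2^l"
proof -
  have "card (\<Union>l'<l. claimed z l') \<le> (\<Sum>l'<l. card (claimed z l'))"
    by (rule card_UN_le) simp
  also have "\<dots> \<le> (\<Sum>l'<l. 2^l')"
    by (rule sum_mono) (rule card_claimed_le)
  also have "\<dots> < 2^l"
    by (induction l) auto
  finally show ?thesis .
qed

lemma claimed_graph_code:
  assumes "z l = graph_code A h l"
  shows "claimed z l = enumerate A ` {..<2^l}"
proof -
  define as where "as = map (enumerate A) [0..<2^l]"
  have "from_nat (z l) = zip as (map h as)"
    using assms unfolding graph_code_def as_def by simp
  moreover have "fst ` set (zip as (map h as)) = set as"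
    by (metis length_map map_fst_zip set_map)
  ultimately show ?thesis
    unfolding claimed_def as_def by (simp add: atLeast0LessThan)
qed

lemma decode_graph_code:
  assumes z: "z l = graph_code A h l"
    and a: "a \<in> enumerate A ` {..<2^l}" "a \<notin> (\<Union>l'<l. claimed z l')"
  shows "decode z a = h a"
proof -
  have least: "(LEAST l'. a \<in> claimed z l') = l"
  proof (rule Least_equality)
    show "a \<in> claimed z l" using claimed_graph_code[of z l A h, OF z] a(1) by simp
    show "l \<le> l'" if "a \<in> claimed z l'" for l'
      using that a(2) by (meson UN_I lessThan_iff not_le)
  qed
  define as where "as = map (enumerate A) [0..<2^l]"
  have "from_nat (z l) = zip as (map h as)"
    using z unfolding graph_code_def as_def by simp
  moreover have "a \<in> set as"
    using a(1) unfolding as_def by (simp add: atLeast0LessThan)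
  ultimately have "map_of (from_nat (z l) :: (nat \<times> nat) list) a = Some (h a)"
    by (simp add: map_of_zip_map)
  with least show ?thesis
    unfolding decode_def by simp
qed

lemma decode_agrees_infinitely_often:
  assumes A: "infinite A" and z: "inf_eq z (graph_code A h)"
  shows "infinite {a\<in>A. decode z a = h a}"
proof -
  define L where "L = {l. z l = graph_code A h l}"
  define fresh where "fresh l = enumerate A ` {..<2^l} - (\<Union>l'<l. claimed z l')" for l
  have fresh_nonempty: "fresh l \<noteq> {}" for l
  proof -
    have "card (enumerate A ` {..<2^l}) = 2^l"
      using inj_on_subset[OF inj_enumerate[OF A]] by (simp add: card_image)
    then have "card (\<Union>l'<l. claimed z l') < card (enumerate A ` {..<2^l})"
      using card_claimed_before[of z l] by simp
    moreover have "finite (\<Union>l'<l. claimed z l')"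
      by (simp add: finite_claimed)
    ultimately have "\<not> enumerate A ` {..<2^l} \<subseteq> (\<Union>l'<l. claimed z l')"
      using card_mono by (meson not_le)
    then show ?thesis unfolding fresh_def by blast
  qed
  define pick where "pick l = (SOME a. a \<in> fresh l)" for l
  have pick: "pick l \<in> fresh l" for l
    unfolding pick_def using fresh_nonempty[of l] by (simp add: some_in_eq)
  have pick_enum: "pick l \<in> enumerate A ` {..<2^l}" for l
    using pick[of l] unfolding fresh_def by blast
  have "pick l \<in> A" for l
    using pick_enum[of l] by (auto simp: enumerate_in_set[OF A])
  moreover have "decode z (pick l) = h (pick l)" if "l \<in> L" for l
  proof (rule decode_graph_code)
    show "z l = graph_code A h l" using that unfolding L_def by simp
    show "pick l \<in> enumerate A ` {..<2^l}" by (rule pick_enum)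
    show "pick l \<notin> (\<Union>l'<l. claimed z l')" using pick[of l] unfolding fresh_def by blast
  qed
  ultimately have subset: "pick ` L \<subseteq> {a\<in>A. decode z a = h a}" by blast
  have "inj_on pick L"
  proof (rule linorder_inj_onI')
    fix l1 l2 assume "l1 \<in> L" "l1 < l2"
    then have "pick l1 \<in> claimed z l1"
      using pick[of l1] claimed_graph_code[of z l1 A h] unfolding L_def fresh_def by simp
    then have "pick l1 \<in> (\<Union>l'<l2. claimed z l')"
      using \<open>l1 < l2\<close> by blast
    moreover have "pick l2 \<notin> (\<Union>l'<l2. claimed z l')"
      using pick[of l2] unfolding fresh_def by simp
    ultimately show "pick l1 \<noteq> pick l2" by metis
  qed
  moreover have "infinite L"
    using z unfolding L_def inf_eq_def .
  ultimately have "infinite (pick ` L)"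
    using finite_imageD by blast
  then show ?thesis
    by (rule infinite_super[OF subset])
qed

subsection \<open>The coding real\<close>

(* The trailing 0 keeps every block nonempty, so code_prefix z u m has at least m entries. *)
definition code_block :: "(nat \<Rightarrow> nat) \<Rightarrow> (nat \<Rightarrow> nat) \<Rightarrow> nat \<Rightarrow> nat list" where
  "code_block z u m = (let s = (from_nat (decode z m) :: nat list) in
     if weight s < bound_partition u (Suc m) - bound_partition u m then s @ [0] else [0])"

definition code_prefix :: "(nat \<Rightarrow> nat) \<Rightarrow> (nat \<Rightarrow> nat) \<Rightarrow> nat \<Rightarrow> nat list" where
  "code_prefix z u m = concat (map (code_block z u) [0..<m])"

definition code_real :: "(nat \<Rightarrow> nat) \<Rightarrow> (nat \<Rightarrow> nat) \<Rightarrow> nat \<Rightarrow> nat" where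
  "code_real z u i = code_prefix z u (Suc i) ! i"

lemma code_prefix_0 [simp]: "code_prefix z u 0 = []"
  by (simp add: code_prefix_def)

lemma code_prefix_Suc [simp]: "code_prefix z u (Suc m) = code_prefix z u m @ code_block z u m"
  by (simp add: code_prefix_def)

lemma length_code_prefix: "m \<le> length (code_prefix z u m)"
  by (induction m) (auto simp: code_block_def Let_def)

lemma code_prefix_mono: "k \<le> m \<Longrightarrow> \<exists>w. code_prefix z u m = code_prefix z u k @ w"
  using upt_add_eq_append[of 0 k "m - k"] by (auto simp: code_prefix_def)

lemma weight_code_prefix: "weight (code_prefix z u m) \<le> bound_partition u m"
proof (induction m)
  case (Suc m)
  have "bound_partition u m < bound_partition u (Suc m)"
    using strict_mono_bound_partition by (simp add: strict_mono_Suc_iff)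
  then have "weight (code_block z u m) \<le> bound_partition u (Suc m) - bound_partition u m"
    unfolding code_block_def Let_def by auto
  then show ?case
    using Suc.IH \<open>bound_partition u m < bound_partition u (Suc m)\<close> by simp
qed simp

lemma code_real_mem_cylinder: "code_real z u \<in> cylinder (code_prefix z u m)"
  unfolding mem_cylinder
proof (intro allI impI)
  fix i assume i: "i < length (code_prefix z u m)"
  obtain w where w: "code_prefix z u (max m (Suc i)) = code_prefix z u m @ w"
    using code_prefix_mono[of m "max m (Suc i)"] by auto
  obtain w' where w': "code_prefix z u (max m (Suc i)) = code_prefix z u (Suc i) @ w'"
    using code_prefix_mono[of "Suc i" "max m (Suc i)"] by auto
  have "i < length (code_prefix z u (Suc i))"
    using length_code_prefix[of "Suc i" z u] by simp
  then show "code_real z u i = code_prefix z u m ! i"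
    using i w w' unfolding code_real_def by (metis nth_append)
qed

(* The + 1 leaves room for the 0 that closes a block of code_real. *)
primrec ext_partition :: "(nat \<Rightarrow> nat list \<Rightarrow> nat list) \<Rightarrow> nat \<Rightarrow> nat" where
  "ext_partition e 0 = 0"
| "ext_partition e (Suc k) = ext_partition e k + weight (universal_ext e (ext_partition e k)) + 1"

lemma strict_mono_ext_partition: "strict_mono (ext_partition e)"
  by (rule strict_monoI_Suc) simp

definition ext_code :: "(nat \<Rightarrow> nat list \<Rightarrow> nat list) \<Rightarrow> (nat \<Rightarrow> nat) \<Rightarrow> nat \<Rightarrow> nat" where
  "ext_code e u m = to_nat (universal_ext e (ext_partition e (LEAST k.
     bound_partition u m \<le> ext_partition e k \<and> ext_partition e (Suc k) \<le> bound_partition u (Suc m))))"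

lemma code_real_hit_often:
  assumes e: "extender e"
    and u: "inf_eq u (two_points_after (ext_partition e))"
    and z: "inf_eq z (graph_code (covering_indices (ext_partition e) (bound_partition u)) (ext_code e u))"
  shows "hit_often e (code_real z u)"
  unfolding hit_often_def
proof
  fix n
  let ?i = "ext_partition e" and ?j = "bound_partition u"
  have "infinite {m \<in> covering_indices ?i ?j. decode z m = ext_code e u m}"
    using decode_agrees_infinitely_often
      [OF infinite_covering_indices[OF strict_mono_ext_partition u] z] .
  then obtain m where m: "n \<le> m" "m \<in> covering_indices ?i ?j" "decode z m = ext_code e u m"
    unfolding infinite_nat_iff_unbounded_le by blast
  define k where "k = (LEAST k. ?j m \<le> ?i k \<and> ?i (Suc k) \<le> ?j (Suc m))"
  have "\<exists>k. ?j m \<le> ?i k \<and> ?i (Suc k) \<le> ?j (Suc m)"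
    using m(2) by (simp add: covering_indices_def)
  then have k: "?j m \<le> ?i k \<and> ?i (Suc k) \<le> ?j (Suc m)"
    unfolding k_def by (rule LeastI_ex)
  define W where "W = ?i k"
  have "n \<le> W"
    using m(1) k strict_mono_imp_increasing[OF strict_mono_bound_partition, of m u]
    unfolding W_def by linarith
  have block: "code_block z u m = universal_ext e W @ [0]"
    using m(3) k unfolding code_block_def ext_code_def W_def k_def by (simp add: Let_def)
  have "weight (code_prefix z u m) \<le> W"
    using weight_code_prefix[of z u m] k unfolding W_def by linarith
  then obtain t w where "code_prefix z u m @ universal_ext e W = e W (code_prefix z u m @ t) @ w"
    using universal_ext_absorbs[OF e] by blast
  then have "code_prefix z u (Suc m) = e W (code_prefix z u m @ t) @ w @ [0]"
    using block by simp
  then have "code_real z u \<in> cylinder (e W (code_prefix z u m @ t) @ w @ [0])"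
    by (metis code_real_mem_cylinder)
  then have "code_real z u \<in> cylinder (e W (code_prefix z u m @ t))"
    using cylinder_append_subset by blast
  then show "\<exists>m\<ge>n. \<exists>s. code_real z u \<in> cylinder (e m s)"
    using \<open>n \<le> W\<close> by blast
qed

lemma meagre_avoided_by_code_real:
  assumes "meagre A"
  shows "\<exists>g h. \<forall>u z. inf_eq u g \<longrightarrow> inf_eq z (h u) \<longrightarrow> code_real z u \<notin> A"
proof -
  obtain e where e: "extender e" "\<And>x. x \<in> A \<Longrightarrow> \<not> hit_often e x"
    using meagre_imp_extender[OF assms] by blast
  show ?thesis
    using code_real_hit_often[OF e(1)] e(2)
    by (intro exI[of _ "two_points_after (ext_partition e)"]
        exI[of _ "\<lambda>u. graph_code (covering_indices (ext_partition e) (bound_partition u)) (ext_code e u)"])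
      blast
qed

lemma norm_le_ED_C_M: "norm_le ED C_M"
  unfolding norm_le_def
proof (intro allI impI)
  fix B assume "bounding_family C_M B"
  then have B: "B \<subseteq> Collect meagre" "\<forall>x. \<exists>A\<in>B. x \<in> A"
    by (simp_all add: bounding_family_def C_M_def)
  show "\<exists>B'. bounding_family ED B' \<and> B' \<lesssim> B"
  proof (rule ccontr)
    assume none: "\<not> ?thesis"
    have common: "\<exists>x. \<forall>A\<in>B. inf_eq x (f A)" for f :: "(nat \<Rightarrow> nat) set \<Rightarrow> nat \<Rightarrow> nat"
    proof -
      have "\<not> bounding_family ED (f ` B)"
        using none image_lepoll by blast
      then show ?thesis
        by (simp add: bounding_family_def ED_def)
    qed
    have "\<forall>A\<in>B. \<exists>g h. \<forall>u z. inf_eq u g \<longrightarrow> inf_eq z (h u) \<longrightarrow> code_real z u \<notin> A"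
      using B(1) meagre_avoided_by_code_real by blast
    then obtain g h
      where gh: "\<And>A u z. A \<in> B \<Longrightarrow> inf_eq u (g A) \<Longrightarrow> inf_eq z (h A u) \<Longrightarrow> code_real z u \<notin> A"
      by metis
    obtain u where u: "\<forall>A\<in>B. inf_eq u (g A)"
      using common[of g] by blast
    obtain z where z: "\<forall>A\<in>B. inf_eq z (h A u)"
      using common[of "\<lambda>A. h A u"] by blast
    obtain A where "A \<in> B" "code_real z u \<in> A"
      using B(2) by blast
    then show False
      using gh u z by blast
  qed
qed

lemma inf_eq_dominating_infinite:
  assumes "\<forall>x. \<exists>y\<in>Z. inf_eq y x"
  shows "infinite Z"
proof
  assume "finite Z"
  define g where "g n = Suc (\<Sum>y\<in>Z. y n)" for n
  obtain y where "y \<in> Z" "inf_eq y g"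
    using assms by blast
  moreover have "y n < g n" for n
    unfolding g_def using member_le_sum[OF \<open>y \<in> Z\<close> _ \<open>finite Z\<close>, of "\<lambda>y. y n"] by simp
  ultimately show False
    unfolding inf_eq_def by (metis (mono_tags) empty_Collect_eq finite.emptyI less_irrefl)
qed

lemma norm_le_dual_C_M_dual_ED: "norm_le (dual_rs C_M) (dual_rs ED)"
  unfolding norm_le_def
proof (intro allI impI)
  fix Z assume "bounding_family (dual_rs ED) Z"
  then have Z: "\<forall>x. \<exists>y\<in>Z. inf_eq y x"
    by (simp add: bounding_family_def dual_rs_def ED_def)
  define X where "X = (\<lambda>(z, u). code_real z u) ` (Z \<times> Z)"
  have "X \<lesssim> Z \<times> Z"
    unfolding X_def by (rule image_lepoll)
  moreover have "Z \<times> Z \<approx> Z"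
    using card_of_Times_same_infinite[OF inf_eq_dominating_infinite[OF Z]]
    by (simp add: eqpoll_iff_card_of_ordIso)
  ultimately have "X \<lesssim> Z"
    by (rule lepoll_trans2)
  moreover have "\<exists>x\<in>X. x \<notin> A" if "meagre A" for A
  proof -
    obtain g h where gh: "\<And>u z. inf_eq u g \<Longrightarrow> inf_eq z (h u) \<Longrightarrow> code_real z u \<notin> A"
      using meagre_avoided_by_code_real[OF \<open>meagre A\<close>] by blast
    obtain u z where "u \<in> Z" "inf_eq u g" "z \<in> Z" "inf_eq z (h u)"
      using Z by metis
    then show ?thesis
      using gh unfolding X_def by force
  qed
  then have "bounding_family (dual_rs C_M) X"
    by (simp add: bounding_family_def dual_rs_def C_M_def)
  ultimately show "\<exists>X. bounding_family (dual_rs C_M) X \<and> X \<lesssim> Z"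
    by blast
qed

theorem mainTheorem2:
  fixes \<sigma> :: "nat list \<Rightarrow> nat"
  assumes "suitable \<sigma>"
  shows "tukey_le C_M (ED_sigma \<sigma>) \<and> tukey_le (ED_sigma \<sigma>) ED
       \<and> norm_eq C_M (ED_sigma \<sigma>) \<and> norm_eq (ED_sigma \<sigma>) ED
       \<and> norm_eq (dual_rs C_M) (dual_rs (ED_sigma \<sigma>))
       \<and> norm_eq (dual_rs (ED_sigma \<sigma>)) (dual_rs ED)"
proof -
  have t1: "tukey_le C_M (ED_sigma \<sigma>)"
    using tukey_le_C_M_ED_sigma[OF assms] .
  have t2: "tukey_le (ED_sigma \<sigma>) ED"
    by (rule tukey_le_ED_sigma_ED)
  note n1 = tukey_le_imp_norm_le[OF t1] and n2 = tukey_le_imp_norm_le[OF t2]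
  note d1 = tukey_le_imp_norm_le[OF tukey_le_dual[OF t1]]
    and d2 = tukey_le_imp_norm_le[OF tukey_le_dual[OF t2]]
  show ?thesis
    unfolding norm_eq_def
    using t1 t2 n1 n2 d1 d2
      norm_le_trans[OF n2 norm_le_ED_C_M] norm_le_trans[OF norm_le_ED_C_M n1]
      norm_le_trans[OF norm_le_dual_C_M_dual_ED d2] norm_le_trans[OF d1 norm_le_dual_C_M_dual_ED]
    by blast
qed

end
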